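(* Let $\Omega\subset\mathbb{R}^N$ ($N\in\{2,3\}$) be a bounded connected domain with piecewise smooth boundary and outward normal $\mathbf{n}$, $\nu>0$, $\lambda>0$. Let $(\mathbf{u},p)$ be a sufficiently smooth (up to the boundary) solution on $\overline\Omega\times[0,T]$ of the PPE system $\mathbf{u}_t + (\mathbf{u}\cdot\nabla)\mathbf{u} = \nu\Delta\mathbf{u}-\nabla p + \mathbf{f}$ in $\Omega\times(0,T]$; $\mathbf{n}\times\mathbf{u}=\mathbf{n}\times\mathbf{g}$ and $\nabla\cdot\mathbf{u}=0$ on $\partial\Omega\times[0,T]$; $\Delta p = \nabla\cdot(\mathbf{f}-(\mathbf{u}\cdot\nabla)\mathbf{u})$ in $\Omega$; $\partial p/\partial\mathbf{n} = \mathbf{n}\cdot(\mathbf{f}-\mathbf{g}_t-\nu\nabla\times\nabla\times\mathbf{u}-(\mathbf{u}\cdot\nabla)\mathbf{u})+\lambda\,\mathbf{n}\cdot(\mathbf{u}-\mathbf{g})$ on $\partial\Omega$, with initial data $\mathbf{u}(\cdot,0)=\mathbf{u}_0$ satisfying $\nabla\cdot\mathbf{u}_0=0$ in $\Omega$ and $\mathbf{u}_0=\mathbf{g}(\cdot,0)$ on $\partial\Omega$. Then $(\mathbf{u},p)$ solves the incompressible Navier–Stokes equations $\mathbf{u}_t + (\mathbf{u}\cdot\nabla)\mathbf{u} = \nu\Delta\mathbf{u}-\nabla p + \mathbf{f}$, $\nabla\cdot\mathbf{u}=0$ in $\Omega\times(0,T]$, $\mathbf{u}=\mathbf{g}$ on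 $\partial\Omega\times[0,T]$, $\mathbf{u}(\cdot,0)=\mathbf{u}_0$. *)

theory Defs
  imports "HOL-Analysis.Analysis"
begin

primrec Ck_on :: "nat \<Rightarrow> 'a::real_normed_vector set \<Rightarrow> ('a \<Rightarrow> 'b::real_normed_vector) \<Rightarrow> bool" where
  "Ck_on 0 S G = continuous_on S G"
| "Ck_on (Suc k) S G =
     ((\<forall>z\<in>S. G differentiable (at z)) \<and>
      (\<forall>v. Ck_on k S (\<lambda>z. frechet_derivative G (at z) v)))"

definition smooth_on :: "'a::real_normed_vector set \<Rightarrow> ('a \<Rightarrow> 'b::real_normed_vector) \<Rightarrow> bool" where
  "smooth_on S G \<longleftrightarrow> (\<forall>k. Ck_on k S G)"

definition pdx :: "'n \<Rightarrow> (real^'n \<Rightarrow> 'b::real_normed_vector) \<Rightarrow> real^'n \<Rightarrow> 'b" where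
  "pdx i F x = vector_derivative (\<lambda>h. F (x + h *\<^sub>R axis i 1)) (at 0)"

definition pdt :: "(real^'n \<Rightarrow> real \<Rightarrow> 'b::real_normed_vector) \<Rightarrow> real^'n \<Rightarrow> real \<Rightarrow> 'b" where
  "pdt F x t = vector_derivative (\<lambda>s. F x s) (at t)"

definition sgrad :: "(real^'n \<Rightarrow> real) \<Rightarrow> real^'n \<Rightarrow> real^'n" where
  "sgrad q x = (\<chi> i. pdx i q x)"

definition vdiv :: "(real^'n \<Rightarrow> real^'n) \<Rightarrow> real^'n \<Rightarrow> real" where
  "vdiv w x = (\<Sum>i\<in>UNIV. pdx i (\<lambda>y. w y $ i) x)"

definition slap :: "(real^'n \<Rightarrow> real) \<Rightarrow> real^'n \<Rightarrow> real" where
  "slap q x = (\<Sum>i\<in>UNIV. pdx i (\<lambda>y. pdx i q y) x)"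

definition vlap :: "(real^'n \<Rightarrow> real^'n) \<Rightarrow> real^'n \<Rightarrow> real^'n" where
  "vlap w x = (\<chi> k. slap (\<lambda>y. w y $ k) x)"

definition conv :: "(real^'n \<Rightarrow> real^'n) \<Rightarrow> real^'n \<Rightarrow> real^'n" where
  "conv w x = (\<chi> k. \<Sum>j\<in>UNIV. w x $ j * pdx j (\<lambda>y. w y $ k) x)"

text \<open>For N = 3 this is the unfolding of the cross-product formula; for N = 2 it is
  the unfolding of curl(curl w) with scalar curl w = d_1 w_2 - d_2 w_1.\<close>
definition curlcurl :: "(real^'n \<Rightarrow> real^'n) \<Rightarrow> real^'n \<Rightarrow> real^'n" where
  "curlcurl w x = (\<chi> i. \<Sum>j\<in>UNIV.
      pdx j (\<lambda>y. pdx i (\<lambda>z. w z $ j) y - pdx j (\<lambda>z. w z $ i) y) x)"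

text \<open>Components of the wedge/cross product n x w: (n_i w_j - n_j w_i)_{i,j}.
  For N = 3 these are (up to sign/order) the components of the cross product,
  for N = 2 the single scalar n_1 w_2 - n_2 w_1.\<close>
definition cross_eq :: "real^'n \<Rightarrow> real^'n \<Rightarrow> real^'n \<Rightarrow> bool" where
  "cross_eq n v w \<longleftrightarrow> (\<forall>i j. n $ i * v $ j - n $ j * v $ i = n $ i * w $ j - n $ j * w $ i)"

definition pw_smooth_boundary :: "(real^'n) set \<Rightarrow> (real^'n) set \<Rightarrow> (real^'n \<Rightarrow> real^'n) \<Rightarrow> bool" where
  "pw_smooth_boundary \<Omega> E nrm \<longleftrightarrow>
     closed E \<and> E \<subseteq> frontier \<Omega> \<and>
     frontier \<Omega> \<subseteq> closure (frontier \<Omega> - E) \<and>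
     (CARD('n) = 2 \<longrightarrow> finite E) \<and>
     (CARD('n) = 3 \<longrightarrow> (\<exists>\<Gamma>::(real \<Rightarrow> real^'n) set. finite \<Gamma> \<and>
          (\<forall>\<gamma>\<in>\<Gamma>. \<gamma> C1_differentiable_on {0..1}) \<and> E \<subseteq> (\<Union>\<gamma>\<in>\<Gamma>. \<gamma> ` {0..1}))) \<and>
     (\<forall>x\<in>frontier \<Omega> - E. \<exists>U \<rho>. open U \<and> x \<in> U \<and> smooth_on U \<rho> \<and>
          (\<forall>y\<in>U. sgrad \<rho> y \<noteq> 0) \<and>
          \<Omega> \<inter> U = {y\<in>U. \<rho> y < 0} \<and>
          nrm x = sgrad \<rho> x /\<^sub>R norm (sgrad \<rho> x))"

end

theory Submission
  imports Defs
begin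

text \<open>Taking the divergence of the momentum equation and subtracting the pressure Poisson
  equation shows that \<open>\<phi> = \<nabla>\<cdot>u\<close> solves the heat equation \<open>\<phi>\<^sub>t = \<nu> \<Delta>\<phi>\<close> in \<open>\<Omega>\<close>. As \<open>\<phi>\<close> vanishes on
  \<open>\<partial>\<Omega>\<close> and at \<open>t = 0\<close>, the weak maximum principle gives \<open>\<phi> = 0\<close> on the closed cylinder, hence
  \<open>\<nabla>\<phi> = 0\<close>, i.e. \<open>\<Delta>u = -\<nabla>\<times>\<nabla>\<times>u\<close>, up to the boundary. Extending the momentum equation to
  \<open>\<partial>\<Omega>\<close> by continuity and inserting it into the Neumann condition for \<open>p\<close> yields the ODE
  \<open>w' = -\<lambda> w\<close> for \<open>w = n\<cdot>(u - g)\<close> on the smooth part of \<open>\<partial>\<Omega>\<close>. The compatibility condition gives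
  \<open>w(0) = 0\<close>, so \<open>w = 0\<close>; together with the tangential condition \<open>u = g\<close> there, and on all of \<open>\<partial>\<Omega>\<close>
  by density.\<close>

section \<open>Directional derivatives\<close>

definition dir_deriv :: "('a::real_normed_vector \<Rightarrow> 'b::real_normed_vector) \<Rightarrow> 'a \<Rightarrow> 'a \<Rightarrow> 'b" where
  "dir_deriv F v x = frechet_derivative F (at x) v"

lemma smooth_on_has_derivative:
  assumes "smooth_on S F" "x \<in> S"
  shows "(F has_derivative (\<lambda>v. dir_deriv F v x)) (at x)"
proof -
  have "F differentiable (at x)"
    using assms Ck_on.simps(2)[of 0 S F] unfolding smooth_on_def by blast
  then show ?thesis
    unfolding dir_deriv_def using frechet_derivative_works by (metis eta_contract_eq)
qed

lemma smooth_on_has_derivative_component: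
  assumes "smooth_on S F" "x \<in> S"
  shows "((\<lambda>y. F y $ k) has_derivative (\<lambda>v. dir_deriv F v x $ k)) (at x)"
  using bounded_linear.has_derivative[OF bounded_linear_vec_nth smooth_on_has_derivative[OF assms]] .

lemma smooth_on_dir_deriv: "smooth_on S F \<Longrightarrow> smooth_on S (dir_deriv F v)"
  unfolding smooth_on_def dir_deriv_def by (metis Ck_on.simps(2))

lemma smooth_on_imp_continuous_on: "smooth_on S F \<Longrightarrow> continuous_on S F"
  unfolding smooth_on_def by (metis Ck_on.simps(1))

lemma dir_deriv_cong:
  assumes "open S" "x \<in> S" "smooth_on S F" "\<And>y. y \<in> S \<Longrightarrow> F y = G y"
  shows "dir_deriv G v x = dir_deriv F v x"
proof -
  have "(G has_derivative (\<lambda>v. dir_deriv F v x)) (at x)"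
    using has_derivative_transform_within_open[OF smooth_on_has_derivative[OF assms(3,2)] assms(1,2)]
      assms(4) by blast
  then show ?thesis
    unfolding dir_deriv_def by (metis frechet_derivative_at)
qed

lemma has_vector_derivative_line:
  assumes "(f has_derivative f') (at x)"
  shows "((\<lambda>h. f (x + h *\<^sub>R v)) has_vector_derivative f' v) (at 0)"
proof -
  have "((\<lambda>h::real. x + h *\<^sub>R v) has_derivative (\<lambda>h. h *\<^sub>R v)) (at 0)"
    by (auto intro!: derivative_eq_intros)
  from diff_chain_at[OF this] assms
  have "((\<lambda>h. f (x + h *\<^sub>R v)) has_derivative (\<lambda>h. f' (h *\<^sub>R v))) (at 0)"
    by (simp add: o_def)
  moreover have "f' (h *\<^sub>R v) = h *\<^sub>R f' v" for h
    by (rule linear_scale[OF has_derivative_linear[OF assms]])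
  ultimately show ?thesis
    unfolding has_vector_derivative_def by simp
qed

lemma has_real_derivative_line:
  fixes f :: "'a::real_normed_vector \<Rightarrow> real"
  assumes "(f has_derivative f') (at x)"
  shows "((\<lambda>h. f (x + h *\<^sub>R v)) has_real_derivative f' v) (at 0)"
  using has_vector_derivative_line[OF assms] has_real_derivative_iff_has_vector_derivative by blast

lemma has_real_derivative_line_shift:
  fixes f :: "'a::real_normed_vector \<Rightarrow> real"
  assumes "((\<lambda>h. f (x + s *\<^sub>R v + h *\<^sub>R v)) has_real_derivative D) (at 0)"
  shows "((\<lambda>h. f (x + h *\<^sub>R v)) has_real_derivative D) (at s)"
proof -
  have "((\<lambda>h. f (x + (h + s) *\<^sub>R v)) has_real_derivative D) (at 0)"
    using assms by (simp add: scaleR_add_left ac_simps)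
  then show ?thesis
    using DERIV_shift[of "\<lambda>h. f (x + h *\<^sub>R v)" D 0 s] by simp
qed

lemma has_vector_derivative_time:
  fixes f :: "'a::real_normed_vector \<times> real \<Rightarrow> 'b::real_normed_vector"
  assumes "(f has_derivative f') (at (x, t))"
  shows "((\<lambda>s. f (x, s)) has_vector_derivative f' (0, 1)) (at t)"
proof -
  have "((\<lambda>s. (x, s)) has_derivative (\<lambda>h. (0, h))) (at t)"
    by (auto intro!: derivative_eq_intros)
  from diff_chain_at[OF this] assms
  have "((\<lambda>s. f (x, s)) has_derivative (\<lambda>h. f' (0, h))) (at t)"
    by (simp add: o_def)
  moreover have "(\<lambda>h. f' (0, h)) = (\<lambda>h. h *\<^sub>R f' (0, 1))"
  proof
    fix h :: real
    have "f' (0, h) = f' (h *\<^sub>R (0, 1))" by simp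
    also have "\<dots> = h *\<^sub>R f' (0, 1)"
      by (rule linear_scale[OF has_derivative_linear[OF assms]])
    finally show "f' (0, h) = h *\<^sub>R f' (0, 1)" .
  qed
  ultimately show ?thesis
    unfolding has_vector_derivative_def by simp
qed

lemma has_real_derivative_time:
  fixes f :: "'a::real_normed_vector \<times> real \<Rightarrow> real"
  assumes "(f has_derivative f') (at (x, t))"
  shows "((\<lambda>s. f (x, s)) has_real_derivative f' (0, 1)) (at t)"
  using has_vector_derivative_time[OF assms] has_real_derivative_iff_has_vector_derivative by blast

lemma has_real_derivative_space:
  fixes f :: "'a::real_normed_vector \<times> real \<Rightarrow> real"
  assumes "(f has_derivative f') (at (x, t))"
  shows "((\<lambda>h. f (x + h *\<^sub>R v, t)) has_real_derivative f' (v, 0)) (at 0)"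
  using has_real_derivative_line[OF assms, of "(v, 0)"] by simp

lemma pdx_has_derivative:
  assumes "(F has_derivative F') (at x)"
  shows "pdx i F x = F' (axis i 1)"
  unfolding pdx_def using has_vector_derivative_line[OF assms] vector_derivative_at by blast

lemma pdx_slice:
  assumes "open S" "(x, t) \<in> S" "\<And>y. (y, t) \<in> S \<Longrightarrow> H y = K (y, t)"
    and "(K has_derivative K') (at (x, t))"
  shows "pdx i H x = K' (axis i 1, 0)"
proof -
  have "((\<lambda>y. (y, t)) has_derivative (\<lambda>h. (h, 0))) (at x)"
    by (auto intro!: derivative_eq_intros)
  from diff_chain_at[OF this] assms(4)
  have "((\<lambda>y. K (y, t)) has_derivative (\<lambda>h. K' (h, 0))) (at x)"
    by (simp add: o_def)
  moreover have "open ((\<lambda>y. (y, t)) -` S)"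
    by (rule continuous_open_vimage[OF assms(1)]) (intro continuous_intros)
  ultimately have "(H has_derivative (\<lambda>h. K' (h, 0))) (at x)"
    by (rule has_derivative_transform_within_open) (use assms(2,3) in auto)
  then show ?thesis
    by (simp add: pdx_has_derivative)
qed

lemma pdt_has_derivative:
  assumes "(case_prod F has_derivative F') (at (x, t))"
  shows "pdt F x t = F' (0, 1)"
  unfolding pdt_def using has_vector_derivative_time[OF assms] vector_derivative_at by fastforce

section \<open>Symmetry of second derivatives\<close>

lemma second_difference_mean_value:
  fixes f fa fab :: "'a::real_normed_vector \<Rightarrow> real"
  assumes da: "\<And>w. w \<in> S \<Longrightarrow> ((\<lambda>h. f (w + h *\<^sub>R a)) has_real_derivative fa w) (at 0)"
    and dab: "\<And>w. w \<in> S \<Longrightarrow> ((\<lambda>h. fa (w + h *\<^sub>R b)) has_real_derivative fab w) (at 0)"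
    and s: "0 < s"
    and in_S: "\<And>x y. 0 \<le> x \<Longrightarrow> x \<le> s \<Longrightarrow> 0 \<le> y \<Longrightarrow> y \<le> s \<Longrightarrow> z + x *\<^sub>R a + y *\<^sub>R b \<in> S"
  obtains x y where "0 < x" "x < s" "0 < y" "y < s"
    "f (z + s *\<^sub>R a + s *\<^sub>R b) - f (z + s *\<^sub>R a) - f (z + s *\<^sub>R b) + f z
       = s * s * fab (z + x *\<^sub>R a + y *\<^sub>R b)"
proof -
  define g where "g x = f ((z + s *\<^sub>R b) + x *\<^sub>R a) - f (z + x *\<^sub>R a)" for x
  have "(g has_real_derivative fa ((z + s *\<^sub>R b) + x *\<^sub>R a) - fa (z + x *\<^sub>R a)) (at x)"
    if "0 \<le> x" "x \<le> s" for x
  proof -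
    have "z + s *\<^sub>R b + x *\<^sub>R a \<in> S" "z + x *\<^sub>R a \<in> S"
      using in_S[of x s] in_S[of x 0] that s by (simp_all add: algebra_simps)
    then have "((\<lambda>h. f ((z + s *\<^sub>R b) + h *\<^sub>R a)) has_real_derivative fa ((z + s *\<^sub>R b) + x *\<^sub>R a)) (at x)"
      "((\<lambda>h. f (z + h *\<^sub>R a)) has_real_derivative fa (z + x *\<^sub>R a)) (at x)"
      by (simp_all add: da has_real_derivative_line_shift)
    then show ?thesis
      unfolding g_def by (rule DERIV_diff)
  qed
  from MVT2[OF s this] obtain x where x: "0 < x" "x < s"
    "g s - g 0 = s * (fa ((z + s *\<^sub>R b) + x *\<^sub>R a) - fa (z + x *\<^sub>R a))"
    by auto
  define k where "k y = fa ((z + x *\<^sub>R a) + y *\<^sub>R b)" for y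
  have "(k has_real_derivative fab ((z + x *\<^sub>R a) + y *\<^sub>R b)) (at y)" if "0 \<le> y" "y \<le> s" for y
    unfolding k_def using in_S[of x y] that x
    by (simp add: dab has_real_derivative_line_shift)
  from MVT2[OF s this] obtain y where y: "0 < y" "y < s"
    "k s - k 0 = s * fab ((z + x *\<^sub>R a) + y *\<^sub>R b)"
    by auto
  have "f (z + s *\<^sub>R a + s *\<^sub>R b) - f (z + s *\<^sub>R a) - f (z + s *\<^sub>R b) + f z = g s - g 0"
    unfolding g_def by (simp add: algebra_simps)
  also have "\<dots> = s * (k s - k 0)"
    using x(3) unfolding k_def by (simp add: algebra_simps)
  also have "\<dots> = s * s * fab (z + x *\<^sub>R a + y *\<^sub>R b)"
    using y(3) by simp
  finally show ?thesis
    using that x y by blast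
qed

lemma second_difference_quotient_tendsto:
  fixes f fa fab :: "'a::real_normed_vector \<Rightarrow> real"
  assumes S: "open S" "z \<in> S"
    and da: "\<And>w. w \<in> S \<Longrightarrow> ((\<lambda>h. f (w + h *\<^sub>R a)) has_real_derivative fa w) (at 0)"
    and dab: "\<And>w. w \<in> S \<Longrightarrow> ((\<lambda>h. fa (w + h *\<^sub>R b)) has_real_derivative fab w) (at 0)"
    and cont: "continuous_on S fab"
  shows "((\<lambda>s. (f (z + s *\<^sub>R a + s *\<^sub>R b) - f (z + s *\<^sub>R a) - f (z + s *\<^sub>R b) + f z) / (s * s))
           \<longlongrightarrow> fab z) (at_right 0)"
proof (rule tendstoI)
  fix e :: real assume "e > 0"
  obtain r where r: "r > 0" "ball z r \<subseteq> S"
    using S openE by blast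
  obtain d where d: "d > 0" "\<And>w. w \<in> S \<Longrightarrow> dist w z < d \<Longrightarrow> dist (fab w) (fab z) < e"
    using cont S(2) \<open>e > 0\<close> unfolding continuous_on_iff by metis
  define m where "m = min r d / (norm a + norm b + 1)"
  have "m > 0"
    using r d unfolding m_def by (simp add: add_nonneg_pos)
  have near: "dist (z + x *\<^sub>R a + y *\<^sub>R b) z < min r d"
    if "0 \<le> x" "x \<le> s" "0 \<le> y" "y \<le> s" "s < m" for x y s
  proof -
    have "dist (z + x *\<^sub>R a + y *\<^sub>R b) z \<le> x * norm a + y * norm b"
      using that norm_triangle_ineq[of "x *\<^sub>R a" "y *\<^sub>R b"] by (simp add: dist_norm)
    also have "\<dots> \<le> s * norm a + s * norm b"
      using that by (intro add_mono mult_right_mono) auto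
    also have "\<dots> < min r d"
    proof -
      have "norm a + norm b + 1 > 0"
        by (simp add: add_nonneg_pos)
      then have "s * (norm a + norm b + 1) < min r d"
        using that(5) unfolding m_def by (simp add: pos_less_divide_eq)
      then show ?thesis
        using that by (simp add: distrib_left)
    qed
    finally show ?thesis .
  qed
  have "\<forall>\<^sub>F s in at_right 0. 0 < s \<and> s < m"
    using \<open>m > 0\<close> by (auto simp: eventually_at_right_field)
  then show "\<forall>\<^sub>F s in at_right 0.
      dist ((f (z + s *\<^sub>R a + s *\<^sub>R b) - f (z + s *\<^sub>R a) - f (z + s *\<^sub>R b) + f z) / (s * s)) (fab z) < e"
  proof (rule eventually_mono, elim conjE)
    fix s :: real assume s: "0 < s" "s < m"
    have in_S: "z + x *\<^sub>R a + y *\<^sub>R b \<in> S" if "0 \<le> x" "x \<le> s" "0 \<le> y" "y \<le> s" for x y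
      using near[OF that s(2)] r(2) by (auto simp: dist_commute)
    obtain x y where xy: "0 < x" "x < s" "0 < y" "y < s"
      "f (z + s *\<^sub>R a + s *\<^sub>R b) - f (z + s *\<^sub>R a) - f (z + s *\<^sub>R b) + f z
         = s * s * fab (z + x *\<^sub>R a + y *\<^sub>R b)"
      using second_difference_mean_value[OF da dab s(1) in_S] by blast
    have "dist (z + x *\<^sub>R a + y *\<^sub>R b) z < min r d"
      by (rule near) (use xy s in auto)
    then have "dist (fab (z + x *\<^sub>R a + y *\<^sub>R b)) (fab z) < e"
      using d(2) in_S xy by auto
    then show "dist ((f (z + s *\<^sub>R a + s *\<^sub>R b) - f (z + s *\<^sub>R a) - f (z + s *\<^sub>R b) + f z) / (s * s))
        (fab z) < e"
      using xy(5) s(1) by simp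
  qed
qed

lemma mixed_directional_derivatives_eq:
  fixes f fa fb fab fba :: "'a::real_normed_vector \<Rightarrow> real"
  assumes S: "open S" "z \<in> S"
    and da: "\<And>w. w \<in> S \<Longrightarrow> ((\<lambda>h. f (w + h *\<^sub>R a)) has_real_derivative fa w) (at 0)"
    and db: "\<And>w. w \<in> S \<Longrightarrow> ((\<lambda>h. f (w + h *\<^sub>R b)) has_real_derivative fb w) (at 0)"
    and dab: "\<And>w. w \<in> S \<Longrightarrow> ((\<lambda>h. fa (w + h *\<^sub>R b)) has_real_derivative fab w) (at 0)"
    and dba: "\<And>w. w \<in> S \<Longrightarrow> ((\<lambda>h. fb (w + h *\<^sub>R a)) has_real_derivative fba w) (at 0)"
    and "continuous_on S fab" "continuous_on S fba"
  shows "fab z = fba z"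
proof (rule tendsto_unique[OF trivial_limit_at_right_real])
  show "((\<lambda>s. (f (z + s *\<^sub>R a + s *\<^sub>R b) - f (z + s *\<^sub>R a) - f (z + s *\<^sub>R b) + f z) / (s * s))
           \<longlongrightarrow> fab z) (at_right 0)"
    by (rule second_difference_quotient_tendsto[OF S da dab \<open>continuous_on S fab\<close>])
  have "((\<lambda>s. (f (z + s *\<^sub>R b + s *\<^sub>R a) - f (z + s *\<^sub>R b) - f (z + s *\<^sub>R a) + f z) / (s * s))
           \<longlongrightarrow> fba z) (at_right 0)"
    by (rule second_difference_quotient_tendsto[OF S db dba \<open>continuous_on S fba\<close>])
  moreover have "f (z + s *\<^sub>R b + s *\<^sub>R a) - f (z + s *\<^sub>R b) - f (z + s *\<^sub>R a)
      = f (z + s *\<^sub>R a + s *\<^sub>R b) - f (z + s *\<^sub>R a) - f (z + s *\<^sub>R b)" for s :: real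
    by (simp add: algebra_simps)
  ultimately show "((\<lambda>s. (f (z + s *\<^sub>R a + s *\<^sub>R b) - f (z + s *\<^sub>R a) - f (z + s *\<^sub>R b) + f z) / (s * s))
           \<longlongrightarrow> fba z) (at_right 0)"
    by simp
qed

lemma dir_deriv_commute:
  fixes F :: "'a::real_normed_vector \<Rightarrow> real^'m"
  assumes "open S" "smooth_on S F" "z \<in> S"
  shows "dir_deriv (dir_deriv F a) b z = dir_deriv (dir_deriv F b) a z"
proof (subst vec_eq_iff, rule allI)
  fix k :: 'm
  have line: "((\<lambda>h. G (w + h *\<^sub>R v) $ k) has_real_derivative dir_deriv G v w $ k) (at 0)"
    if "smooth_on S G" "w \<in> S" for G v w
    using has_real_derivative_line[OF smooth_on_has_derivative_component[OF that]] .
  have cont: "continuous_on S (\<lambda>w. dir_deriv (dir_deriv F v) v' w $ k)" for v v'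
    using assms(2) by (intro continuous_on_component smooth_on_imp_continuous_on smooth_on_dir_deriv)
  show "dir_deriv (dir_deriv F a) b z $ k = dir_deriv (dir_deriv F b) a z $ k"
    by (rule mixed_directional_derivatives_eq[OF assms(1,3), where f="\<lambda>w. F w $ k"])
       (use line assms(2) smooth_on_dir_deriv cont in blast)+
qed

section \<open>Weak maximum principle for the heat equation\<close>

lemma deriv_nonneg_at_left_max:
  fixes f :: "real \<Rightarrow> real"
  assumes "(f has_real_derivative D) (at t)" "d > 0"
    and "\<And>s. t - d < s \<Longrightarrow> s < t \<Longrightarrow> f s \<le> f t"
  shows "D \<ge> 0"
proof (rule ccontr)
  assume "\<not> D \<ge> 0"
  then obtain d' where "d' > 0" "\<And>h. h > 0 \<Longrightarrow> h < d' \<Longrightarrow> f t < f (t - h)"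
    using DERIV_neg_dec_left[OF assms(1)] by auto
  moreover have "f (t - min d d' / 2) \<le> f t"
    using assms(2,3) \<open>d' > 0\<close> by simp
  ultimately show False
    using assms(2) by (smt (verit) field_sum_of_halves)
qed

lemma second_deriv_nonpos_at_local_max:
  fixes g g' :: "real \<Rightarrow> real"
  assumes r: "r > 0"
    and g: "\<And>x. \<bar>x\<bar> < r \<Longrightarrow> (g has_real_derivative g' x) (at x)"
    and g': "(g' has_real_derivative D) (at 0)"
    and max: "\<And>x. \<bar>x\<bar> < r \<Longrightarrow> g x \<le> g 0"
  shows "D \<le> 0"
proof (rule ccontr)
  assume "\<not> D \<le> 0"
  have "g' 0 = 0"
    by (rule DERIV_local_max[OF g[of 0] r]) (use r max in auto)
  obtain d where d: "d > 0" "\<And>h. h > 0 \<Longrightarrow> h < d \<Longrightarrow> g' 0 < g' h"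
    using DERIV_pos_inc_right[OF g'] \<open>\<not> D \<le> 0\<close> by auto
  define h where "h = min d r / 2"
  have h: "0 < h" "h < d" "h < r"
    using d r unfolding h_def by auto
  obtain \<xi> where "0 < \<xi>" "\<xi> < h" "g h - g 0 = (h - 0) * g' \<xi>"
    using MVT2[OF h(1), of g g'] g h by force
  moreover have "g' \<xi> > 0"
    using d(2) \<open>0 < \<xi>\<close> \<open>\<xi> < h\<close> h \<open>g' 0 = 0\<close> by force
  moreover have "g h \<le> g 0"
    using max[of h] h by simp
  ultimately show False
    using mult_pos_pos[OF h(1) \<open>g' \<xi> > 0\<close>] by simp
qed

lemma second_partial_nonpos_at_max:
  fixes \<psi> dA :: "(real^'n) \<times> real \<Rightarrow> real"
  assumes "open \<Omega>" "x \<in> \<Omega>"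
    and max: "\<And>y. y \<in> \<Omega> \<Longrightarrow> \<psi> (y, t) \<le> \<psi> (x, t)"
    and dx: "\<And>y. y \<in> \<Omega> \<Longrightarrow> ((\<lambda>h. \<psi> (y + h *\<^sub>R axis j 1, t)) has_real_derivative dA (y, t)) (at 0)"
    and dxx: "((\<lambda>h. dA (x + h *\<^sub>R axis j 1, t)) has_real_derivative D) (at 0)"
  shows "D \<le> 0"
proof -
  obtain r where r: "r > 0" "ball x r \<subseteq> \<Omega>"
    using assms(1,2) openE by blast
  have near: "x + h *\<^sub>R axis j 1 \<in> \<Omega>" if "\<bar>h\<bar> < r" for h
    using r that by (auto simp: dist_norm)
  show ?thesis
  proof (rule second_deriv_nonpos_at_local_max[OF r(1) _ dxx])
    show "((\<lambda>h. \<psi> (x + h *\<^sub>R axis j 1, t)) has_real_derivative dA (x + h *\<^sub>R axis j 1, t)) (at h)"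
      if "\<bar>h\<bar> < r" for h
      using has_real_derivative_line_shift[where f="\<lambda>y. \<psi> (y, t)", OF dx[OF near[OF that]]] .
    show "\<psi> (x + h *\<^sub>R axis j 1, t) \<le> \<psi> (x + 0 *\<^sub>R axis j 1, t)" if "\<bar>h\<bar> < r" for h
      using max[OF near[OF that]] by simp
  qed
qed

text \<open>At a positive maximum in the interior of the cylinder, or on its top, we would have
  \<open>\<psi>\<^sub>t \<ge> 0 \<ge> \<nu> \<Delta>\<psi>\<close>.\<close>
lemma heat_strict_subsolution_nonpos:
  fixes \<Omega> :: "(real^'n) set" and \<psi> \<psi>t :: "(real^'n) \<times> real \<Rightarrow> real"
    and dA dB :: "'n \<Rightarrow> (real^'n) \<times> real \<Rightarrow> real"
  assumes \<Omega>: "open \<Omega>" "bounded \<Omega>" and "\<nu> \<ge> 0"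
    and cont: "continuous_on (closure \<Omega> \<times> {0..T}) \<psi>"
    and bd: "\<And>x t. x \<in> frontier \<Omega> \<Longrightarrow> t \<in> {0..T} \<Longrightarrow> \<psi> (x, t) \<le> 0"
    and ini: "\<And>x. x \<in> \<Omega> \<Longrightarrow> \<psi> (x, 0) \<le> 0"
    and dt: "\<And>x t. x \<in> \<Omega> \<Longrightarrow> t \<in> {0<..T} \<Longrightarrow>
      ((\<lambda>s. \<psi> (x, s)) has_real_derivative \<psi>t (x, t)) (at t)"
    and dx: "\<And>x t j. x \<in> \<Omega> \<Longrightarrow> t \<in> {0<..T} \<Longrightarrow>
      ((\<lambda>h. \<psi> (x + h *\<^sub>R axis j 1, t)) has_real_derivative dA j (x, t)) (at 0)"
    and dxx: "\<And>x t j. x \<in> \<Omega> \<Longrightarrow> t \<in> {0<..T} \<Longrightarrow>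
      ((\<lambda>h. dA j (x + h *\<^sub>R axis j 1, t)) has_real_derivative dB j (x, t)) (at 0)"
    and strict: "\<And>x t. x \<in> \<Omega> \<Longrightarrow> t \<in> {0<..T} \<Longrightarrow> \<psi>t (x, t) < \<nu> * (\<Sum>j\<in>UNIV. dB j (x, t))"
    and xt: "x \<in> closure \<Omega>" "t \<in> {0..T}"
  shows "\<psi> (x, t) \<le> 0"
proof (rule ccontr)
  assume "\<not> \<psi> (x, t) \<le> 0"
  define K where "K = closure \<Omega> \<times> {0..T}"
  have "compact K"
    unfolding K_def using \<Omega>(2) by (intro compact_Times) (simp_all add: compact_closure)
  then obtain x0 t0 where z0: "(x0, t0) \<in> K" and max: "\<And>z. z \<in> K \<Longrightarrow> \<psi> z \<le> \<psi> (x0, t0)"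
    using continuous_attains_sup[of K \<psi>] cont xt unfolding K_def by force
  have pos: "\<psi> (x0, t0) > 0"
    using max[of "(x, t)"] xt \<open>\<not> \<psi> (x, t) \<le> 0\<close> unfolding K_def by auto
  have x0: "x0 \<in> \<Omega>"
    using z0 pos bd \<Omega>(1) unfolding K_def frontier_def by (force simp: interior_open)
  have t0: "t0 \<in> {0<..T}"
    using z0 pos ini[OF x0] unfolding K_def by (cases "t0 = 0") auto
  have "\<psi>t (x0, t0) \<ge> 0"
  proof (rule deriv_nonneg_at_left_max[OF dt[OF x0 t0]])
    show "t0 > 0" using t0 by simp
    show "\<psi> (x0, s) \<le> \<psi> (x0, t0)" if "t0 - t0 < s" "s < t0" for s
      using max[of "(x0, s)"] that t0 x0 closure_subset unfolding K_def by auto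
  qed
  moreover have "dB j (x0, t0) \<le> 0" for j
  proof (rule second_partial_nonpos_at_max[OF \<Omega>(1) x0 _ dx[OF _ t0] dxx[OF x0 t0]])
    show "\<psi> (y, t0) \<le> \<psi> (x0, t0)" if "y \<in> \<Omega>" for y
      using max[of "(y, t0)"] that closure_subset t0 unfolding K_def by auto
  qed
  then have "\<nu> * (\<Sum>j\<in>UNIV. dB j (x0, t0)) \<le> 0"
    using \<open>\<nu> \<ge> 0\<close> by (simp add: mult_nonneg_nonpos sum_nonpos)
  ultimately show False
    using strict[OF x0 t0] by linarith
qed

lemma heat_max_principle:
  fixes \<Omega> :: "(real^'n) set" and \<phi> \<phi>t :: "(real^'n) \<times> real \<Rightarrow> real"
    and dA dB :: "'n \<Rightarrow> (real^'n) \<times> real \<Rightarrow> real"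
  assumes \<Omega>: "open \<Omega>" "bounded \<Omega>" and \<nu>: "\<nu> \<ge> 0"
    and cont: "continuous_on (closure \<Omega> \<times> {0..T}) \<phi>"
    and bd: "\<And>x t. x \<in> frontier \<Omega> \<Longrightarrow> t \<in> {0..T} \<Longrightarrow> \<phi> (x, t) \<le> 0"
    and ini: "\<And>x. x \<in> \<Omega> \<Longrightarrow> \<phi> (x, 0) \<le> 0"
    and dt: "\<And>x t. x \<in> \<Omega> \<Longrightarrow> t \<in> {0<..T} \<Longrightarrow>
      ((\<lambda>s. \<phi> (x, s)) has_real_derivative \<phi>t (x, t)) (at t)"
    and dx: "\<And>x t j. x \<in> \<Omega> \<Longrightarrow> t \<in> {0<..T} \<Longrightarrow>
      ((\<lambda>h. \<phi> (x + h *\<^sub>R axis j 1, t)) has_real_derivative dA j (x, t)) (at 0)"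
    and dxx: "\<And>x t j. x \<in> \<Omega> \<Longrightarrow> t \<in> {0<..T} \<Longrightarrow>
      ((\<lambda>h. dA j (x + h *\<^sub>R axis j 1, t)) has_real_derivative dB j (x, t)) (at 0)"
    and heat: "\<And>x t. x \<in> \<Omega> \<Longrightarrow> t \<in> {0<..T} \<Longrightarrow> \<phi>t (x, t) = \<nu> * (\<Sum>j\<in>UNIV. dB j (x, t))"
    and xt: "x \<in> closure \<Omega>" "t \<in> {0..T}"
  shows "\<phi> (x, t) \<le> 0"
proof (rule field_le_epsilon)
  fix e :: real assume "e > 0"
  define \<epsilon> where "\<epsilon> = e / (T + 1)"
  have "T \<ge> 0" "\<epsilon> > 0"
    using xt \<open>e > 0\<close> by (auto simp: \<epsilon>_def)
  define \<psi> where "\<psi> z = \<phi> z - \<epsilon> * snd z" for z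
  have "\<psi> (x, t) \<le> 0"
  proof (rule heat_strict_subsolution_nonpos[where \<psi>t="\<lambda>z. \<phi>t z - \<epsilon>", OF \<Omega> \<nu> _ _ _ _ _ dxx _ xt])
    show "continuous_on (closure \<Omega> \<times> {0..T}) \<psi>"
      unfolding \<psi>_def by (intro continuous_intros cont)
    show "\<psi> (x, t) \<le> 0" if "x \<in> frontier \<Omega>" "t \<in> {0..T}" for x t
      using bd[OF that] that \<open>\<epsilon> > 0\<close> by (simp add: \<psi>_def) (smt (verit) mult_nonneg_nonneg)
    show "\<psi> (x, 0) \<le> 0" if "x \<in> \<Omega>" for x
      using ini[OF that] by (simp add: \<psi>_def)
    show "((\<lambda>s. \<psi> (x, s)) has_real_derivative \<phi>t (x, t) - \<epsilon>) (at t)"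
      if "x \<in> \<Omega>" "t \<in> {0<..T}" for x t
      unfolding \<psi>_def using dt[OF that] by (auto intro!: derivative_eq_intros)
    show "((\<lambda>h. \<psi> (x + h *\<^sub>R axis j 1, t)) has_real_derivative dA j (x, t)) (at 0)"
      if "x \<in> \<Omega>" "t \<in> {0<..T}" for x t j
      unfolding \<psi>_def using dx[OF that, of j] by (auto intro!: derivative_eq_intros)
    show "\<phi>t (x, t) - \<epsilon> < \<nu> * (\<Sum>j\<in>UNIV. dB j (x, t))" if "x \<in> \<Omega>" "t \<in> {0<..T}" for x t
      using heat[OF that] \<open>\<epsilon> > 0\<close> by simp
  qed
  moreover have "\<epsilon> * t \<le> e"
  proof -
    have "\<epsilon> * t \<le> \<epsilon> * (T + 1)"
      using xt \<open>\<epsilon> > 0\<close> by (intro mult_left_mono) auto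
    also have "\<dots> = e"
      using \<open>T \<ge> 0\<close> by (simp add: \<epsilon>_def)
    finally show ?thesis .
  qed
  ultimately show "\<phi> (x, t) \<le> 0 + e"
    by (simp add: \<psi>_def)
qed

lemma heat_solution_eq_0:
  fixes \<Omega> :: "(real^'n) set" and \<phi> \<phi>t :: "(real^'n) \<times> real \<Rightarrow> real"
    and dA dB :: "'n \<Rightarrow> (real^'n) \<times> real \<Rightarrow> real"
  assumes \<Omega>: "open \<Omega>" "bounded \<Omega>" and \<nu>: "\<nu> \<ge> 0"
    and cont: "continuous_on (closure \<Omega> \<times> {0..T}) \<phi>"
    and bd: "\<And>x t. x \<in> frontier \<Omega> \<Longrightarrow> t \<in> {0..T} \<Longrightarrow> \<phi> (x, t) = 0"
    and ini: "\<And>x. x \<in> \<Omega> \<Longrightarrow> \<phi> (x, 0) = 0"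
    and dt: "\<And>x t. x \<in> \<Omega> \<Longrightarrow> t \<in> {0<..T} \<Longrightarrow>
      ((\<lambda>s. \<phi> (x, s)) has_real_derivative \<phi>t (x, t)) (at t)"
    and dx: "\<And>x t j. x \<in> \<Omega> \<Longrightarrow> t \<in> {0<..T} \<Longrightarrow>
      ((\<lambda>h. \<phi> (x + h *\<^sub>R axis j 1, t)) has_real_derivative dA j (x, t)) (at 0)"
    and dxx: "\<And>x t j. x \<in> \<Omega> \<Longrightarrow> t \<in> {0<..T} \<Longrightarrow>
      ((\<lambda>h. dA j (x + h *\<^sub>R axis j 1, t)) has_real_derivative dB j (x, t)) (at 0)"
    and heat: "\<And>x t. x \<in> \<Omega> \<Longrightarrow> t \<in> {0<..T} \<Longrightarrow> \<phi>t (x, t) = \<nu> * (\<Sum>j\<in>UNIV. dB j (x, t))"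
    and xt: "x \<in> closure \<Omega>" "t \<in> {0..T}"
  shows "\<phi> (x, t) = 0"
proof -
  have "\<phi> (x, t) \<le> 0"
    by (rule heat_max_principle[OF \<Omega> \<nu> cont _ _ dt dx dxx heat xt]) (simp_all add: bd ini)
  moreover have "- \<phi> (x, t) \<le> 0"
  proof (rule heat_max_principle[where \<phi>="\<lambda>z. - \<phi> z" and \<phi>t="\<lambda>z. - \<phi>t z" and
        dA="\<lambda>j z. - dA j z" and dB="\<lambda>j z. - dB j z", OF \<Omega> \<nu> _ _ _ _ _ _ _ xt])
    show "continuous_on (closure \<Omega> \<times> {0..T}) (\<lambda>z. - \<phi> z)"
      by (intro continuous_intros cont)
    show "((\<lambda>s. - \<phi> (x, s)) has_real_derivative - \<phi>t (x, t)) (at t)"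
      if "x \<in> \<Omega>" "t \<in> {0<..T}" for x t
      using DERIV_minus[OF dt[OF that]] .
    show "((\<lambda>h. - \<phi> (x + h *\<^sub>R axis j 1, t)) has_real_derivative - dA j (x, t)) (at 0)"
      if "x \<in> \<Omega>" "t \<in> {0<..T}" for x t j
      using DERIV_minus[OF dx[OF that]] .
    show "((\<lambda>h. - dA j (x + h *\<^sub>R axis j 1, t)) has_real_derivative - dB j (x, t)) (at 0)"
      if "x \<in> \<Omega>" "t \<in> {0<..T}" for x t j
      using DERIV_minus[OF dxx[OF that]] .
  qed (simp_all add: bd ini heat sum_negf)
  ultimately show ?thesis
    by simp
qed

section \<open>Solutions of the PPE system\<close>

lemma linear_ode_zero_initial:
  fixes w w' :: "real \<Rightarrow> real"
  assumes "0 \<le> t" "w 0 = 0"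
    and w: "\<And>s. 0 \<le> s \<Longrightarrow> s \<le> t \<Longrightarrow> (w has_real_derivative w' s) (at s)"
    and ode: "\<And>s. 0 < s \<Longrightarrow> s < t \<Longrightarrow> w' s = c * w s"
  shows "w t = 0"
proof (cases "t = 0")
  case False
  define y where "y s = w s * exp (- c * s)" for s
  have "0 < t"
    using assms(1) False by simp
  have "isCont w s" if "0 \<le> s" "s \<le> t" for s
    using DERIV_isCont[OF w[OF that]] .
  then have "continuous_on {0..t} y"
    unfolding y_def by (intro continuous_intros continuous_at_imp_continuous_on) auto
  moreover have "(y has_real_derivative 0) (at s)" if "0 < s" "s < t" for s
  proof -
    have "(y has_real_derivative w' s * exp (- c * s) + w s * (exp (- c * s) * (- c))) (at s)"
      unfolding y_def using w[of s] that by (auto intro!: derivative_eq_intros)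
    then show ?thesis
      using ode[OF that] by (simp add: algebra_simps)
  qed
  ultimately have "y t = y 0"
    by (rule DERIV_isconst_end[OF \<open>0 < t\<close>])
  then show ?thesis
    using \<open>w 0 = 0\<close> by (simp add: y_def)
qed (use assms in simp)

lemma vec_eq_0_if_parallel_orthogonal:
  fixes n a :: "real^'n"
  assumes "n \<noteq> 0" "\<And>i j. n $ i * a $ j = n $ j * a $ i" "n \<bullet> a = 0"
  shows "a = 0"
proof (subst vec_eq_iff, rule allI)
  fix j
  have "a $ j * (n \<bullet> n) = (\<Sum>i\<in>UNIV. n $ i * (n $ i * a $ j))"
    by (simp add: inner_vec_def sum_distrib_left algebra_simps)
  also have "\<dots> = (\<Sum>i\<in>UNIV. n $ i * (n $ j * a $ i))"
    using assms(2) by simp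
  also have "\<dots> = n $ j * (n \<bullet> a)"
    by (simp add: inner_vec_def sum_distrib_left algebra_simps)
  finally show "a $ j = 0 $ j"
    using assms(1,3) by simp
qed

lemma pw_smooth_boundary_norm_normal:
  assumes "pw_smooth_boundary \<Omega> E nrm" "x \<in> frontier \<Omega> - E"
  shows "norm (nrm x) = 1"
proof -
  obtain U \<rho> where "x \<in> U" "\<forall>y\<in>U. sgrad \<rho> y \<noteq> 0"
    "nrm x = sgrad \<rho> x /\<^sub>R norm (sgrad \<rho> x)"
    using assms(1)[unfolded pw_smooth_boundary_def] assms(2) by metis
  then show ?thesis
    by simp
qed

abbreviation xdir :: "'n \<Rightarrow> (real^'n) \<times> real" where
  "xdir i \<equiv> (axis i 1, 0)"

abbreviation tdir :: "(real^'n) \<times> real" where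
  "tdir \<equiv> (0, 1)"

locale ppe_solution =
  fixes \<Omega> E :: "(real^'n) set" and nrm :: "real^'n \<Rightarrow> real^'n"
    and S :: "((real^'n) \<times> real) set"
    and u f g :: "real^'n \<Rightarrow> real \<Rightarrow> real^'n" and p :: "real^'n \<Rightarrow> real \<Rightarrow> real"
    and u0 :: "real^'n \<Rightarrow> real^'n" and \<nu> lam T :: real
  assumes open_\<Omega>: "open \<Omega>" and bounded_\<Omega>: "bounded \<Omega>"
    and bdry: "pw_smooth_boundary \<Omega> E nrm"
    and nu_nonneg: "\<nu> \<ge> 0" and T_nonneg: "T \<ge> 0"
    and open_S: "open S" and cylinder_S: "closure \<Omega> \<times> {0..T} \<subseteq> S"
    and smooth_u: "smooth_on S (case_prod u)" and smooth_p: "smooth_on S (case_prod p)"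
    and smooth_f: "smooth_on S (case_prod f)" and smooth_g: "smooth_on S (case_prod g)"
    and mom: "\<And>x t. x \<in> \<Omega> \<Longrightarrow> t \<in> {0<..T} \<Longrightarrow>
        pdt u x t + conv (\<lambda>y. u y t) x
          = \<nu> *\<^sub>R vlap (\<lambda>y. u y t) x - sgrad (\<lambda>y. p y t) x + f x t"
    and tang: "\<And>x t. x \<in> frontier \<Omega> - E \<Longrightarrow> t \<in> {0..T} \<Longrightarrow>
        cross_eq (nrm x) (u x t) (g x t)"
    and divbd: "\<And>x t. x \<in> frontier \<Omega> \<Longrightarrow> t \<in> {0..T} \<Longrightarrow> vdiv (\<lambda>y. u y t) x = 0"
    and ppe: "\<And>x t. x \<in> \<Omega> \<Longrightarrow> t \<in> {0<..T} \<Longrightarrow>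
        slap (\<lambda>y. p y t) x = vdiv (\<lambda>y. f y t - conv (\<lambda>z. u z t) y) x"
    and neum: "\<And>x t. x \<in> frontier \<Omega> - E \<Longrightarrow> t \<in> {0..T} \<Longrightarrow>
        nrm x \<bullet> sgrad (\<lambda>y. p y t) x
          = nrm x \<bullet> (f x t - pdt g x t - \<nu> *\<^sub>R curlcurl (\<lambda>y. u y t) x - conv (\<lambda>y. u y t) x)
            + lam * (nrm x \<bullet> (u x t - g x t))"
    and init: "\<And>x. x \<in> closure \<Omega> \<Longrightarrow> u x 0 = u0 x"
    and div0: "\<And>x. x \<in> \<Omega> \<Longrightarrow> vdiv u0 x = 0"
    and comp: "\<And>x. x \<in> frontier \<Omega> \<Longrightarrow> u0 x = g x 0"
begin

abbreviation U :: "(real^'n) \<times> real \<Rightarrow> real^'n" where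
  "U \<equiv> case_prod u"

lemma closure_in_S: "x \<in> closure \<Omega> \<Longrightarrow> t \<in> {0..T} \<Longrightarrow> (x, t) \<in> S"
  using cylinder_S by auto

lemma interior_in_S: "x \<in> \<Omega> \<Longrightarrow> t \<in> {0..T} \<Longrightarrow> (x, t) \<in> S"
  using closure_in_S closure_subset by blast

lemma frontier_in_S: "x \<in> frontier \<Omega> \<Longrightarrow> t \<in> {0..T} \<Longrightarrow> (x, t) \<in> S"
  using closure_in_S by (auto simp: frontier_def)

lemma smooth_dir_deriv_u: "smooth_on S (dir_deriv U v)" "smooth_on S (dir_deriv (dir_deriv U v) v')"
  using smooth_u by (simp_all add: smooth_on_dir_deriv)

lemma pdx_u:
  assumes "(x, t) \<in> S"
  shows "pdx i (\<lambda>y. u y t $ k) x = dir_deriv U (xdir i) (x, t) $ k"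
  by (rule pdx_slice[OF open_S assms _ smooth_on_has_derivative_component[OF smooth_u assms]]) simp

lemma pdx_pdx_u:
  assumes "(x, t) \<in> S"
  shows "pdx j (\<lambda>y. pdx i (\<lambda>y'. u y' t $ k) y) x = dir_deriv (dir_deriv U (xdir i)) (xdir j) (x, t) $ k"
  by (rule pdx_slice[OF open_S assms _ smooth_on_has_derivative_component[OF smooth_dir_deriv_u(1) assms]])
     (simp add: pdx_u)

lemma pdx_p:
  assumes "(x, t) \<in> S"
  shows "pdx i (\<lambda>y. p y t) x = dir_deriv (case_prod p) (xdir i) (x, t)"
  by (rule pdx_slice[OF open_S assms _ smooth_on_has_derivative[OF smooth_p assms]]) simp

lemma pdx_pdx_p:
  assumes "(x, t) \<in> S"
  shows "pdx j (\<lambda>y. pdx i (\<lambda>y'. p y' t) y) x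
    = dir_deriv (dir_deriv (case_prod p) (xdir i)) (xdir j) (x, t)"
  by (rule pdx_slice[OF open_S assms _ smooth_on_has_derivative[OF smooth_on_dir_deriv[OF smooth_p] assms]])
     (simp add: pdx_p)

lemma pdt_u: "(x, t) \<in> S \<Longrightarrow> pdt u x t = dir_deriv U tdir (x, t)"
  by (rule pdt_has_derivative[OF smooth_on_has_derivative[OF smooth_u]])

lemma pdt_g: "(x, t) \<in> S \<Longrightarrow> pdt g x t = dir_deriv (case_prod g) tdir (x, t)"
  by (rule pdt_has_derivative[OF smooth_on_has_derivative[OF smooth_g]])

lemma conv_component:
  "(x, t) \<in> S \<Longrightarrow> conv (\<lambda>y. u y t) x $ k = (\<Sum>j\<in>UNIV. U (x, t) $ j * dir_deriv U (xdir j) (x, t) $ k)"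
  by (simp add: conv_def pdx_u)

lemma vlap_component:
  "(x, t) \<in> S \<Longrightarrow> vlap (\<lambda>y. u y t) x $ k = (\<Sum>i\<in>UNIV. dir_deriv (dir_deriv U (xdir i)) (xdir i) (x, t) $ k)"
  by (simp add: vlap_def slap_def pdx_pdx_u)

lemma sgrad_component:
  "(x, t) \<in> S \<Longrightarrow> sgrad (\<lambda>y. p y t) x $ k = dir_deriv (case_prod p) (xdir k) (x, t)"
  by (simp add: sgrad_def pdx_p)

lemma curlcurl_component:
  assumes "(x, t) \<in> S"
  shows "curlcurl (\<lambda>y. u y t) x $ i = (\<Sum>j\<in>UNIV. dir_deriv (dir_deriv U (xdir i)) (xdir j) (x, t) $ j
      - dir_deriv (dir_deriv U (xdir j)) (xdir j) (x, t) $ i)"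
proof -
  have "pdx j (\<lambda>y. pdx i (\<lambda>z. u z t $ j) y - pdx j (\<lambda>z. u z t $ i) y) x
      = dir_deriv (dir_deriv U (xdir i)) (xdir j) (x, t) $ j - dir_deriv (dir_deriv U (xdir j)) (xdir j) (x, t) $ i"
    for j
    by (rule pdx_slice[OF open_S assms, where K="\<lambda>z. dir_deriv U (xdir i) z $ j - dir_deriv U (xdir j) z $ i"])
       (auto simp: pdx_u intro!: has_derivative_diff smooth_on_has_derivative_component[OF smooth_dir_deriv_u(1) assms])
  then show ?thesis
    by (simp add: curlcurl_def)
qed

definition div_u :: "(real^'n) \<times> real \<Rightarrow> real" where
  "div_u z = (\<Sum>i\<in>UNIV. dir_deriv U (xdir i) z $ i)"

definition grad_div_u :: "'n \<Rightarrow> (real^'n) \<times> real \<Rightarrow> real" where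
  "grad_div_u j z = (\<Sum>i\<in>UNIV. dir_deriv (dir_deriv U (xdir i)) (xdir j) z $ i)"

lemma vdiv_u: "(x, t) \<in> S \<Longrightarrow> vdiv (\<lambda>y. u y t) x = div_u (x, t)"
  by (simp add: vdiv_def div_u_def pdx_u)

lemma has_derivative_div_u:
  "z \<in> S \<Longrightarrow> (div_u has_derivative (\<lambda>v. \<Sum>i\<in>UNIV. dir_deriv (dir_deriv U (xdir i)) v z $ i)) (at z)"
  unfolding div_u_def
  by (intro has_derivative_sum smooth_on_has_derivative_component[OF smooth_on_dir_deriv[OF smooth_u]])

lemma has_derivative_grad_div_u:
  "z \<in> S \<Longrightarrow> (grad_div_u j has_derivative
     (\<lambda>v. \<Sum>i\<in>UNIV. dir_deriv (dir_deriv (dir_deriv U (xdir i)) (xdir j)) v z $ i)) (at z)"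
  unfolding grad_div_u_def
  by (intro has_derivative_sum smooth_on_has_derivative_component[OF smooth_dir_deriv_u(2)])

lemma continuous_on_div_u: "continuous_on S div_u"
  unfolding div_u_def
  by (intro continuous_on_sum continuous_on_component smooth_on_imp_continuous_on[OF smooth_dir_deriv_u(1)])

lemma continuous_on_grad_div_u: "continuous_on S (grad_div_u j)"
  unfolding grad_div_u_def
  by (intro continuous_on_sum continuous_on_component smooth_on_imp_continuous_on[OF smooth_dir_deriv_u(2)])

lemma open_S_over_\<Omega>: "open (S \<inter> (\<Omega> \<times> UNIV))"
  using open_S open_\<Omega> by (intro open_Int open_Times) auto

lemma dir_deriv_u_commute:
  "z \<in> S \<Longrightarrow> dir_deriv (dir_deriv U v) w z = dir_deriv (dir_deriv U w) v z"
  by (rule dir_deriv_commute[OF open_S smooth_u])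

lemma pdx_forcing_component:
  assumes x: "x \<in> \<Omega>" and t: "t \<in> {0<..T}"
  shows "pdx k (\<lambda>y. (f y t - conv (\<lambda>z. u z t) y) $ k) x
      = dir_deriv (dir_deriv U tdir) (xdir k) (x, t) $ k
        - \<nu> * (\<Sum>i\<in>UNIV. dir_deriv (dir_deriv (dir_deriv U (xdir i)) (xdir i)) (xdir k) (x, t) $ k)
        + dir_deriv (dir_deriv (case_prod p) (xdir k)) (xdir k) (x, t)"
proof -
  have xt: "(x, t) \<in> S"
    using interior_in_S x t by auto
  define R where "R z = dir_deriv U tdir z $ k
      - \<nu> * (\<Sum>i\<in>UNIV. dir_deriv (dir_deriv U (xdir i)) (xdir i) z $ k) + dir_deriv (case_prod p) (xdir k) z"
    for z
  have forcing: "(f y t - conv (\<lambda>z. u z t) y) $ k = R (y, t)" if "(y, t) \<in> S \<inter> (\<Omega> \<times> UNIV)" for y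
  proof -
    have y: "y \<in> \<Omega>" "(y, t) \<in> S"
      using that by auto
    have "(pdt u y t + conv (\<lambda>y. u y t) y) $ k = (\<nu> *\<^sub>R vlap (\<lambda>y. u y t) y - sgrad (\<lambda>y. p y t) y + f y t) $ k"
      using mom[OF y(1) t] by simp
    then show ?thesis
      using pdt_u[OF y(2)] vlap_component[OF y(2)] sgrad_component[OF y(2)] by (simp add: R_def)
  qed
  have R_deriv: "(R has_derivative (\<lambda>v. dir_deriv (dir_deriv U tdir) v (x, t) $ k
      - \<nu> * (\<Sum>i\<in>UNIV. dir_deriv (dir_deriv (dir_deriv U (xdir i)) (xdir i)) v (x, t) $ k)
      + dir_deriv (dir_deriv (case_prod p) (xdir k)) v (x, t))) (at (x, t))"
    unfolding R_def
    by (intro has_derivative_add has_derivative_diff has_derivative_mult_right has_derivative_sum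
        smooth_on_has_derivative_component[OF smooth_dir_deriv_u(1) xt]
        smooth_on_has_derivative_component[OF smooth_dir_deriv_u(2) xt]
        smooth_on_has_derivative[OF smooth_on_dir_deriv[OF smooth_p] xt])
  have "(x, t) \<in> S \<inter> (\<Omega> \<times> UNIV)"
    using xt x by simp
  from pdx_slice[OF open_S_over_\<Omega> this forcing R_deriv] show ?thesis
    by simp
qed

lemma third_dir_deriv_u_commute:
  assumes "z \<in> S"
  shows "dir_deriv (dir_deriv (dir_deriv U a) a) c z = dir_deriv (dir_deriv (dir_deriv U c) a) a z"
proof -
  have "dir_deriv (dir_deriv (dir_deriv U a) a) c z = dir_deriv (dir_deriv (dir_deriv U a) c) a z"
    by (rule dir_deriv_commute[OF open_S smooth_dir_deriv_u(1) assms])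
  also have "\<dots> = dir_deriv (dir_deriv (dir_deriv U c) a) a z"
    by (rule dir_deriv_cong[OF open_S assms smooth_dir_deriv_u(2)]) (simp add: dir_deriv_u_commute)
  finally show ?thesis .
qed

lemma div_u_heat_equation:
  assumes x: "x \<in> \<Omega>" and t: "t \<in> {0<..T}"
  shows "(\<Sum>i\<in>UNIV. dir_deriv (dir_deriv U (xdir i)) tdir (x, t) $ i)
       = \<nu> * (\<Sum>j\<in>UNIV. \<Sum>i\<in>UNIV. dir_deriv (dir_deriv (dir_deriv U (xdir i)) (xdir j)) (xdir j) (x, t) $ i)"
proof -
  have xt: "(x, t) \<in> S"
    using interior_in_S x t by auto
  have "(\<Sum>k\<in>UNIV. dir_deriv (dir_deriv (case_prod p) (xdir k)) (xdir k) (x, t))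
      = (\<Sum>k\<in>UNIV. pdx k (\<lambda>y. (f y t - conv (\<lambda>z. u z t) y) $ k) x)"
    using ppe[OF x t] by (simp add: slap_def vdiv_def pdx_pdx_p[OF xt])
  then have time_div: "(\<Sum>k\<in>UNIV. dir_deriv (dir_deriv U tdir) (xdir k) (x, t) $ k)
      = \<nu> * (\<Sum>k\<in>UNIV. \<Sum>i\<in>UNIV. dir_deriv (dir_deriv (dir_deriv U (xdir i)) (xdir i)) (xdir k) (x, t) $ k)"
    unfolding pdx_forcing_component[OF x t] by (simp add: sum.distrib sum_subtractf sum_distrib_left)
  have "(\<Sum>i\<in>UNIV. dir_deriv (dir_deriv U (xdir i)) tdir (x, t) $ i)
      = (\<Sum>k\<in>UNIV. dir_deriv (dir_deriv U tdir) (xdir k) (x, t) $ k)"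
    by (simp add: dir_deriv_u_commute[OF xt])
  also have "\<dots> = \<nu> * (\<Sum>k\<in>UNIV. \<Sum>i\<in>UNIV. dir_deriv (dir_deriv (dir_deriv U (xdir k)) (xdir i)) (xdir i) (x, t) $ k)"
    unfolding time_div third_dir_deriv_u_commute[OF xt] ..
  also have "\<dots> = \<nu> * (\<Sum>j\<in>UNIV. \<Sum>i\<in>UNIV. dir_deriv (dir_deriv (dir_deriv U (xdir i)) (xdir j)) (xdir j) (x, t) $ i)"
    by (subst sum.swap) (rule refl)
  finally show ?thesis .
qed

lemma vdiv_u0: "x \<in> \<Omega> \<Longrightarrow> vdiv u0 x = div_u (x, 0)"
proof -
  assume x: "x \<in> \<Omega>"
  then have x0: "(x, 0) \<in> S \<inter> (\<Omega> \<times> UNIV)"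
    using interior_in_S T_nonneg by auto
  have "u0 y = u y 0" if "y \<in> \<Omega>" for y
    using init[OF subsetD[OF closure_subset that]] by simp
  then have "pdx i (\<lambda>y. u0 y $ i) x = dir_deriv U (xdir i) (x, 0) $ i" for i
    using x0 by (intro pdx_slice[OF open_S_over_\<Omega> x0 _ smooth_on_has_derivative_component[OF smooth_u]]) auto
  then show ?thesis
    by (simp add: vdiv_def div_u_def)
qed

lemma div_u_eq_0:
  assumes "x \<in> closure \<Omega>" "t \<in> {0..T}"
  shows "div_u (x, t) = 0"
proof (rule heat_solution_eq_0[where \<phi>=div_u and dA=grad_div_u
      and \<phi>t="\<lambda>z. \<Sum>i\<in>UNIV. dir_deriv (dir_deriv U (xdir i)) tdir z $ i"
      and dB="\<lambda>j z. \<Sum>i\<in>UNIV. dir_deriv (dir_deriv (dir_deriv U (xdir i)) (xdir j)) (xdir j) z $ i",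
      OF open_\<Omega> bounded_\<Omega> nu_nonneg _ _ _ _ _ _ _ assms])
  show "continuous_on (closure \<Omega> \<times> {0..T}) div_u"
    using continuous_on_subset[OF continuous_on_div_u cylinder_S] .
  show "div_u (x, t) = 0" if "x \<in> frontier \<Omega>" "t \<in> {0..T}" for x t
    using divbd[OF that] vdiv_u[OF frontier_in_S[OF that]] by simp
  show "div_u (x, 0) = 0" if "x \<in> \<Omega>" for x
    using div0[OF that] vdiv_u0[OF that] by simp
  fix x t j assume xt: "x \<in> \<Omega>" "t \<in> {0<..T}"
  then have S: "(x, t) \<in> S"
    using interior_in_S by auto
  show "((\<lambda>s. div_u (x, s)) has_real_derivative
      (\<Sum>i\<in>UNIV. dir_deriv (dir_deriv U (xdir i)) tdir (x, t) $ i)) (at t)"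
    using has_real_derivative_time[OF has_derivative_div_u[OF S]] .
  show "((\<lambda>h. div_u (x + h *\<^sub>R axis j 1, t)) has_real_derivative grad_div_u j (x, t)) (at 0)"
    using has_real_derivative_space[OF has_derivative_div_u[OF S]] by (simp add: grad_div_u_def)
  show "((\<lambda>h. grad_div_u j (x + h *\<^sub>R axis j 1, t)) has_real_derivative
      (\<Sum>i\<in>UNIV. dir_deriv (dir_deriv (dir_deriv U (xdir i)) (xdir j)) (xdir j) (x, t) $ i)) (at 0)"
    using has_real_derivative_space[OF has_derivative_grad_div_u[OF S]] .
  show "(\<Sum>i\<in>UNIV. dir_deriv (dir_deriv U (xdir i)) tdir (x, t) $ i)
      = \<nu> * (\<Sum>j\<in>UNIV. \<Sum>i\<in>UNIV. dir_deriv (dir_deriv (dir_deriv U (xdir i)) (xdir j)) (xdir j) (x, t) $ i)"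
    by (rule div_u_heat_equation[OF xt])
qed

lemma grad_div_u_eq_0:
  assumes "x \<in> closure \<Omega>" "t \<in> {0..T}"
  shows "grad_div_u j (x, t) = 0"
proof -
  have "grad_div_u j (y, s) = 0" if y: "y \<in> \<Omega>" and s: "s \<in> {0..T}" for y s
  proof -
    obtain r where r: "r > 0" "ball y r \<subseteq> \<Omega>"
      using open_\<Omega> y openE by blast
    have "((\<lambda>h. div_u (y + h *\<^sub>R axis j 1, s)) has_real_derivative grad_div_u j (y, s)) (at 0)"
      using has_real_derivative_space[OF has_derivative_div_u[OF interior_in_S[OF y s]]]
      by (simp add: grad_div_u_def)
    moreover have "div_u (y + h *\<^sub>R axis j 1, s) \<le> div_u (y + 0 *\<^sub>R axis j 1, s)" if "\<bar>0 - h\<bar> < r" for h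
    proof -
      have "y + h *\<^sub>R axis j 1 \<in> \<Omega>"
        using r that by (auto simp: dist_norm)
      then have "y + h *\<^sub>R axis j 1 \<in> closure \<Omega>" "y \<in> closure \<Omega>"
        using y closure_subset by auto
      then show ?thesis
        using div_u_eq_0 s by simp
    qed
    ultimately show ?thesis
      using DERIV_local_max r(1) by blast
  qed
  moreover have "continuous_on (closure (\<Omega> \<times> {0..T})) (grad_div_u j)"
    using continuous_on_subset[OF continuous_on_grad_div_u cylinder_S] by (simp add: closure_Times)
  ultimately show ?thesis
    using continuous_constant_on_closure[of "\<Omega> \<times> {0..T}" "grad_div_u j" 0 "(x, t)"] assms
    by (auto simp: closure_Times)
qed

lemma vlap_add_curlcurl_eq_0:
  assumes "x \<in> closure \<Omega>" "t \<in> {0..T}"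
  shows "vlap (\<lambda>y. u y t) x + curlcurl (\<lambda>y. u y t) x = 0"
proof (subst vec_eq_iff, rule allI)
  fix k
  have xt: "(x, t) \<in> S"
    using closure_in_S assms .
  have "(vlap (\<lambda>y. u y t) x + curlcurl (\<lambda>y. u y t) x) $ k
      = (\<Sum>j\<in>UNIV. dir_deriv (dir_deriv U (xdir k)) (xdir j) (x, t) $ j)"
    by (simp add: vlap_component[OF xt] curlcurl_component[OF xt] sum_subtractf)
  also have "\<dots> = grad_div_u k (x, t)"
    by (simp add: grad_div_u_def dir_deriv_u_commute[OF xt])
  finally show "(vlap (\<lambda>y. u y t) x + curlcurl (\<lambda>y. u y t) x) $ k = 0 $ k"
    using grad_div_u_eq_0[OF assms] by simp
qed

lemma momentum_on_closure:
  assumes "x \<in> closure \<Omega>" "t \<in> {0<..T}"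
  shows "pdt u x t + conv (\<lambda>y. u y t) x = \<nu> *\<^sub>R vlap (\<lambda>y. u y t) x - sgrad (\<lambda>y. p y t) x + f x t"
proof -
  define M where "M z = dir_deriv U tdir z
      + (\<chi> k. \<Sum>j\<in>UNIV. U z $ j * dir_deriv U (xdir j) z $ k)
      - (\<nu> *\<^sub>R (\<chi> k. \<Sum>i\<in>UNIV. dir_deriv (dir_deriv U (xdir i)) (xdir i) z $ k)
         - (\<chi> k. dir_deriv (case_prod p) (xdir k) z) + case_prod f z)" for z
  have M_eq: "M (y, s) = pdt u y s + conv (\<lambda>y. u y s) y
      - (\<nu> *\<^sub>R vlap (\<lambda>y. u y s) y - sgrad (\<lambda>y. p y s) y + f y s)" if "(y, s) \<in> S" for y s
    by (simp add: M_def vec_eq_iff pdt_u[OF that] conv_component[OF that] vlap_component[OF that]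
        sgrad_component[OF that])
  have "continuous_on S M"
    unfolding M_def
    by (intro continuous_intros continuous_on_vec_lambda continuous_on_component
        smooth_on_imp_continuous_on[OF smooth_dir_deriv_u(1)] smooth_on_imp_continuous_on[OF smooth_dir_deriv_u(2)]
        smooth_on_imp_continuous_on[OF smooth_u] smooth_on_imp_continuous_on[OF smooth_on_dir_deriv[OF smooth_p]]
        smooth_on_imp_continuous_on[OF smooth_f])
  moreover have "closure (\<Omega> \<times> {0<..T}) \<subseteq> S"
  proof -
    have "closure {0<..T} \<subseteq> {0..T}"
      by (rule closure_minimal) auto
    then show ?thesis
      using cylinder_S by (auto simp: closure_Times)
  qed
  ultimately have "continuous_on (closure (\<Omega> \<times> {0<..T})) M"
    by (rule continuous_on_subset)
  moreover have "M (y, s) = 0" if "(y, s) \<in> \<Omega> \<times> {0<..T}" for y s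
    using M_eq[OF interior_in_S] mom that by auto
  moreover have "(x, t) \<in> closure (\<Omega> \<times> {0<..T})"
    using assms closure_subset by (auto simp: closure_Times)
  ultimately have "M (x, t) = 0"
    using continuous_constant_on_closure[of "\<Omega> \<times> {0<..T}" M 0 "(x, t)"] by auto
  then show ?thesis
    using M_eq[OF closure_in_S] assms by auto
qed

lemma has_real_derivative_normal_residual:
  assumes "(x, t) \<in> S"
  shows "((\<lambda>s. n \<bullet> (u x s - g x s)) has_real_derivative n \<bullet> (pdt u x t - pdt g x t)) (at t)"
proof -
  have "((\<lambda>z. n \<bullet> (U z - case_prod g z)) has_derivative
      (\<lambda>v. n \<bullet> (dir_deriv U v (x, t) - dir_deriv (case_prod g) v (x, t)))) (at (x, t))"
    by (intro has_derivative_inner_right has_derivative_diff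
        smooth_on_has_derivative[OF smooth_u assms] smooth_on_has_derivative[OF smooth_g assms])
  from has_real_derivative_time[OF this] show ?thesis
    by (simp add: pdt_u[OF assms] pdt_g[OF assms])
qed

lemma normal_residual_ode:
  assumes x: "x \<in> frontier \<Omega> - E" and t: "t \<in> {0<..T}"
  shows "nrm x \<bullet> (pdt u x t - pdt g x t) = - lam * (nrm x \<bullet> (u x t - g x t))"
proof -
  have xt: "x \<in> closure \<Omega>" "t \<in> {0..T}"
    using x t by (auto simp: frontier_def)
  define n C L Pg where "n = nrm x" and "C = conv (\<lambda>y. u y t) x"
    and "L = vlap (\<lambda>y. u y t) x" and "Pg = sgrad (\<lambda>y. p y t) x"
  have "curlcurl (\<lambda>y. u y t) x = - L"
    using vlap_add_curlcurl_eq_0[OF xt] unfolding L_def by (simp add: add_eq_0_iff2)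
  then have "n \<bullet> Pg = n \<bullet> f x t - n \<bullet> pdt g x t + \<nu> * (n \<bullet> L) - n \<bullet> C + lam * (n \<bullet> (u x t - g x t))"
    using neum[OF x xt(2)] unfolding n_def C_def Pg_def by (simp add: inner_diff_right inner_add_right)
  moreover have "pdt u x t = \<nu> *\<^sub>R L - Pg + f x t - C"
    using momentum_on_closure[OF xt(1) t] unfolding C_def L_def Pg_def by (simp add: eq_diff_eq)
  then have "n \<bullet> (pdt u x t - pdt g x t) = \<nu> * (n \<bullet> L) - n \<bullet> Pg + n \<bullet> f x t - n \<bullet> C - n \<bullet> pdt g x t"
    by (simp add: inner_diff_right inner_add_right)
  ultimately show ?thesis
    unfolding n_def by linarith
qed

lemma u_eq_g_on_smooth_boundary:
  assumes x: "x \<in> frontier \<Omega> - E" and t: "t \<in> {0..T}"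
  shows "u x t = g x t"
proof -
  have x_S: "(x, s) \<in> S" if "s \<in> {0..T}" for s
    using frontier_in_S x that by blast
  have "nrm x \<bullet> (u x t - g x t) = 0"
  proof (rule linear_ode_zero_initial[where w="\<lambda>s. nrm x \<bullet> (u x s - g x s)"])
    show "0 \<le> t"
      using t by simp
    show "nrm x \<bullet> (u x 0 - g x 0) = 0"
      using init[of x] comp[of x] x by (simp add: frontier_def)
    show "((\<lambda>s. nrm x \<bullet> (u x s - g x s)) has_real_derivative nrm x \<bullet> (pdt u x s - pdt g x s)) (at s)"
      if "0 \<le> s" "s \<le> t" for s
      using has_real_derivative_normal_residual[OF x_S] that t by auto
    show "nrm x \<bullet> (pdt u x s - pdt g x s) = - lam * (nrm x \<bullet> (u x s - g x s))"
      if "0 < s" "s < t" for s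
      using normal_residual_ode[OF x] that t by auto
  qed
  moreover have "nrm x \<noteq> 0"
    using pw_smooth_boundary_norm_normal[OF bdry x] by auto
  moreover have "nrm x $ i * (u x t - g x t) $ j = nrm x $ j * (u x t - g x t) $ i" for i j
    using tang[OF x t] unfolding cross_eq_def by (simp add: algebra_simps)
  ultimately have "u x t - g x t = 0"
    using vec_eq_0_if_parallel_orthogonal by blast
  then show ?thesis
    by simp
qed

lemma u_eq_g_on_boundary:
  assumes x: "x \<in> frontier \<Omega>" and t: "t \<in> {0..T}"
  shows "u x t = g x t"
proof -
  have "closure (frontier \<Omega> - E) \<subseteq> closure \<Omega>"
    by (rule closure_minimal) (auto simp: frontier_def)
  then have slice: "(\<lambda>y. (y, t)) ` closure (frontier \<Omega> - E) \<subseteq> S"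
    using closure_in_S t by auto
  have "continuous_on (closure (frontier \<Omega> - E)) (\<lambda>y. (y, t))"
    by (intro continuous_intros)
  from continuous_on_compose2[OF smooth_on_imp_continuous_on[OF smooth_u] this slice]
    continuous_on_compose2[OF smooth_on_imp_continuous_on[OF smooth_g] this slice]
  have "continuous_on (closure (frontier \<Omega> - E)) (\<lambda>y. u y t - g y t)"
    by (intro continuous_on_diff) simp_all
  moreover have "x \<in> closure (frontier \<Omega> - E)"
    using bdry x unfolding pw_smooth_boundary_def by auto
  ultimately have "u x t - g x t = 0"
    using continuous_constant_on_closure[of "frontier \<Omega> - E" "\<lambda>y. u y t - g y t" 0 x]
      u_eq_g_on_smooth_boundary t by auto
  then show ?thesis
    by simp
qed

end

theorem mainTheorem3:
  fixes \<Omega> E :: "(real^'n) set"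
    and nrm :: "real^'n \<Rightarrow> real^'n"
    and u f g :: "real^'n \<Rightarrow> real \<Rightarrow> real^'n"
    and p :: "real^'n \<Rightarrow> real \<Rightarrow> real"
    and u0 :: "real^'n \<Rightarrow> real^'n"
    and \<nu> lam T :: real
  assumes dim: "CARD('n) = 2 \<or> CARD('n) = 3"
    and dom: "open \<Omega>" "bounded \<Omega>" "connected \<Omega>" "\<Omega> \<noteq> {}"
    and bdry: "pw_smooth_boundary \<Omega> E nrm"
    and nu: "\<nu> > 0" and lampos: "lam > 0"
    and smooth: "\<exists>S. open S \<and> closure \<Omega> \<times> {0..T} \<subseteq> S \<and>
        smooth_on S (\<lambda>z. u (fst z) (snd z)) \<and> smooth_on S (\<lambda>z. p (fst z) (snd z)) \<and>
        smooth_on S (\<lambda>z. f (fst z) (snd z)) \<and> smooth_on S (\<lambda>z. g (fst z) (snd z))"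
    and mom: "\<And>x t. x \<in> \<Omega> \<Longrightarrow> t \<in> {0<..T} \<Longrightarrow>
        pdt u x t + conv (\<lambda>y. u y t) x
          = \<nu> *\<^sub>R vlap (\<lambda>y. u y t) x - sgrad (\<lambda>y. p y t) x + f x t"
    and tang: "\<And>x t. x \<in> frontier \<Omega> - E \<Longrightarrow> t \<in> {0..T} \<Longrightarrow>
        cross_eq (nrm x) (u x t) (g x t)"
    and divbd: "\<And>x t. x \<in> frontier \<Omega> \<Longrightarrow> t \<in> {0..T} \<Longrightarrow> vdiv (\<lambda>y. u y t) x = 0"
    and ppe: "\<And>x t. x \<in> \<Omega> \<Longrightarrow> t \<in> {0<..T} \<Longrightarrow>
        slap (\<lambda>y. p y t) x = vdiv (\<lambda>y. f y t - conv (\<lambda>z. u z t) y) x"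
    and neum: "\<And>x t. x \<in> frontier \<Omega> - E \<Longrightarrow> t \<in> {0..T} \<Longrightarrow>
        nrm x \<bullet> sgrad (\<lambda>y. p y t) x
          = nrm x \<bullet> (f x t - pdt g x t - \<nu> *\<^sub>R curlcurl (\<lambda>y. u y t) x - conv (\<lambda>y. u y t) x)
            + lam * (nrm x \<bullet> (u x t - g x t))"
    and init: "\<And>x. x \<in> closure \<Omega> \<Longrightarrow> u x 0 = u0 x"
    and div0: "\<And>x. x \<in> \<Omega> \<Longrightarrow> vdiv u0 x = 0"
    and comp: "\<And>x. x \<in> frontier \<Omega> \<Longrightarrow> u0 x = g x 0"
  shows "(\<forall>x\<in>\<Omega>. \<forall>t\<in>{0<..T}.
            pdt u x t + conv (\<lambda>y. u y t) x
              = \<nu> *\<^sub>R vlap (\<lambda>y. u y t) x - sgrad (\<lambda>y. p y t) x + f x t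
          \<and> vdiv (\<lambda>y. u y t) x = 0)
       \<and> (\<forall>x\<in>frontier \<Omega>. \<forall>t\<in>{0..T}. u x t = g x t)
       \<and> (\<forall>x\<in>\<Omega>. u x 0 = u0 x)"
proof (cases "T < 0")
  case True
  then show ?thesis
    using init closure_subset by auto
next
  case False
  obtain S where S: "open S" "closure \<Omega> \<times> {0..T} \<subseteq> S"
    and smooth': "smooth_on S (case_prod u)" "smooth_on S (case_prod p)"
      "smooth_on S (case_prod f)" "smooth_on S (case_prod g)"
    using smooth by (auto simp: case_prod_beta')
  have "\<nu> \<ge> 0" "T \<ge> 0"
    using nu False by simp_all
  then interpret ppe_solution \<Omega> E nrm S u f g p u0 \<nu> lam T
    using dom(1,2) bdry S smooth' mom tang divbd ppe neum init div0 comp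
    by unfold_locales
  have "vdiv (\<lambda>y. u y t) x = 0" if "x \<in> \<Omega>" "t \<in> {0<..T}" for x t
    using vdiv_u[OF interior_in_S] div_u_eq_0[OF subsetD[OF closure_subset]] that by auto
  moreover have "u x 0 = u0 x" if "x \<in> \<Omega>" for x
    using init[OF subsetD[OF closure_subset that]] .
  ultimately show ?thesis
    using mom u_eq_g_on_boundary by auto
qed

end
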